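(* Let $\mathcal{R}$ be a (finite or infinite) set of positive integers and let $R(z)=\sum_{r\in\mathcal{R}} z^r$. Let $K_{\mathcal{R}}(t,x,z)=\sum_S t^{\mathrm{da}(S)}x^{m(S)}z^{|S|}$, where the sum runs over all compositions $S$ (including the empty one) all of whose parts belong to $\mathcal{R}$, $m(S)$ is the number of parts and $|S|$ the sum of the parts. Then, as formal power series, $$K_{\mathcal{R}}(t,x,z)=\frac{1+xR(z)}{1-x^2R(z^2)-tx^2\left(R(z)^2-R(z^2)\right)}.$$
   Context: A composition is a finite sequence $(a_1,\dots,a_m)$, $m\ge0$, of positive integers. For a finite sequence $S=(a_1,\dots,a_m)$, the degree of asymmetry is $\mathrm{da}(S)=|\{i: 1\le i\le m/2,\ a_i\neq a_{m+1-i}\}|$. *)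

theory Defs
  imports "HOL-Computational_Algebra.Formal_Power_Series"
begin

text \<open>Lists are 0-indexed,
  so index i (0-based, i < m div 2) corresponds to position i+1, and its mirror
  m+1-(i+1) corresponds to 0-based index m-1-i.\<close>
definition da :: "nat list \<Rightarrow> nat" where
  "da S = card {i. i < length S div 2 \<and> S ! i \<noteq> S ! (length S - 1 - i)}"

definition comps :: "nat set \<Rightarrow> nat \<Rightarrow> nat list set" where
  "comps R n = {S. (\<forall>a\<in>set S. 0 < a) \<and> set S \<subseteq> R \<and> sum_list S = n}"

text \<open>Trivariate formal power series in t, x, z are represented as nested power
  series: outer variable z, middle variable x, inner variable t.\<close>
type_synonym fps3 = "rat fps fps fps"

definition var_t :: fps3 where "var_t = fps_const (fps_const fps_X)"
definition var_x :: fps3 where "var_x = fps_const fps_X"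
definition var_z :: fps3 where "var_z = fps_X"

definition Rser :: "nat set \<Rightarrow> fps3" where
  "Rser R = Abs_fps (\<lambda>n. if n \<in> R then 1 else 0)"

definition Kser :: "nat set \<Rightarrow> fps3" where
  "Kser R = Abs_fps (\<lambda>n. Abs_fps (\<lambda>m. Abs_fps (\<lambda>d.
      of_nat (card {S \<in> comps R n. length S = m \<and> da S = d}))))"

end

theory Submission
  imports Defs
begin

text \<open>Removing the first and the last part of a composition with at least two parts leaves a
  composition whose degree of asymmetry is smaller by one if the removed parts differ and
  unchanged otherwise. Hence
  \<open>K = 1 + x R(z) + x\<^sup>2 R(z\<^sup>2) K + t x\<^sup>2 (R(z)\<^sup>2 - R(z\<^sup>2)) K\<close>,
  where \<open>R(z)\<^sup>2\<close> counts all pairs of outer parts and \<open>R(z\<^sup>2)\<close> the equal ones.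
  The denominator has constant term \<open>1\<close>, so it is invertible.\<close>

unbundle fps_syntax

lemma da_Nil [simp]: "da [] = 0"
  and da_singleton [simp]: "da [a] = 0"
  by (simp_all add: da_def)

lemma da_Cons_snoc: "da (a # S @ [b]) = da S + (if a = b then 0 else 1)"
proof -
  define A where "A = {i. i < length S div 2 \<and> S ! i \<noteq> S ! (length S - 1 - i)}"
  let ?T = "a # S @ [b]"
  have mirror: "?T ! (length ?T - 1 - Suc j) = S ! (length S - 1 - j)"
    if "j < length S div 2" for j
  proof -
    have "length ?T - 1 - Suc j = Suc (length S - 1 - j)" using that by auto
    then show ?thesis using that by (auto simp: nth_append)
  qed
  have "{i. i < length ?T div 2 \<and> ?T ! i \<noteq> ?T ! (length ?T - 1 - i)}
      = (if a = b then {} else {0}) \<union> Suc ` A"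
  proof (rule set_eqI)
    fix i
    show "i \<in> {i. i < length ?T div 2 \<and> ?T ! i \<noteq> ?T ! (length ?T - 1 - i)}
      \<longleftrightarrow> i \<in> (if a = b then {} else {0}) \<union> Suc ` A"
      by (cases i) (auto simp: nth_append mirror A_def)
  qed
  moreover have "finite A" by (simp add: A_def)
  ultimately show ?thesis
    unfolding da_def by (auto simp: card_image A_def)
qed

lemma length_le_sum_list: "\<forall>a\<in>set S. 0 < (a::nat) \<Longrightarrow> length S \<le> sum_list S"
  by (induction S) auto

lemma finite_comps: "finite (comps R n)"
proof -
  have "comps R n \<subseteq> {S. set S \<subseteq> {..n} \<and> length S \<le> n}"
    using length_le_sum_list member_le_sum_list by (fastforce simp: comps_def)
  then show ?thesis
    using finite_lists_length_le[of "{..n}" n] finite_subset by blast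
qed

definition end_pairs :: "nat set \<Rightarrow> nat \<Rightarrow> (nat \<times> nat) set" where
  "end_pairs R n = {p. fst p \<in> R \<and> snd p \<in> R \<and> fst p + snd p \<le> n}"

definition wrap :: "nat \<times> nat \<Rightarrow> nat list \<Rightarrow> nat list" where
  "wrap p S = fst p # S @ [snd p]"

lemma finite_end_pairs: "finite (end_pairs R n)"
  by (rule finite_subset[of _ "{..n} \<times> {..n}"]) (auto simp: end_pairs_def)

lemma inj_wrap: "inj (wrap p)"
  by (auto simp: inj_def wrap_def)

lemma wrap_eq_imp_eq: "wrap p S = wrap q T \<Longrightarrow> p = q"
  by (metis wrap_def append_is_Nil_conv last_ConsR last_snoc list.inject not_Cons_self2 prod_eq_iff)

lemma comps_decompose:
  assumes "\<forall>r\<in>R. 0 < r"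
  shows "comps R n = (if n = 0 then {[]} else {}) \<union> (if n \<in> R then {[n]} else {})
     \<union> (\<Union>p\<in>end_pairs R n. wrap p ` comps R (n - (fst p + snd p)))"
    (is "_ = ?E \<union> ?W")
proof (rule set_eqI, rule iffI)
  fix S
  assume S: "S \<in> comps R n"
  show "S \<in> ?E \<union> ?W"
  proof (cases S rule: rev_cases)
    case (snoc T b)
    show ?thesis
    proof (cases T)
      case (Cons a U)
      have "(a, b) \<in> end_pairs R n" "U \<in> comps R (n - (a + b))" "S = wrap (a, b) U"
        using S snoc Cons by (auto simp: comps_def end_pairs_def wrap_def)
      then show ?thesis by force
    qed (use S snoc in \<open>auto simp: comps_def\<close>)
  qed (use S in \<open>auto simp: comps_def\<close>)
next
  fix S
  assume "S \<in> ?E \<union> ?W"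
  then show "S \<in> comps R n"
    using assms by (auto simp: comps_def end_pairs_def wrap_def split: if_splits)
qed

definition comp_weight :: "nat list \<Rightarrow> rat fps fps" where
  "comp_weight S = fps_X ^ length S * fps_const (fps_X ^ da S)"

definition Kcoeff :: "nat set \<Rightarrow> nat \<Rightarrow> rat fps fps" where
  "Kcoeff R n = (\<Sum>S\<in>comps R n. comp_weight S)"

lemma comp_weight_nth: "comp_weight S $ m $ d = (if length S = m \<and> da S = d then 1 else 0)"
  by (auto simp: comp_weight_def fps_X_power_mult_nth)

lemma Kser_nth: "Kser R $ n = Kcoeff R n"
proof (intro fps_ext)
  fix m d
  have "Kcoeff R n $ m $ d = (\<Sum>S\<in>comps R n. if length S = m \<and> da S = d then 1 else 0)"
    by (simp add: Kcoeff_def fps_sum_nth comp_weight_nth)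
  also have "\<dots> = of_nat (card {S \<in> comps R n. length S = m \<and> da S = d})"
    by (simp add: sum.inter_filter[symmetric] finite_comps)
  finally show "Kser R $ n $ m $ d = Kcoeff R n $ m $ d"
    by (simp add: Kser_def)
qed

lemma comp_weight_wrap:
  "comp_weight (wrap p S) =
     (if fst p = snd p then fps_X ^ 2 else fps_const fps_X * fps_X ^ 2) * comp_weight S"
proof -
  have "fps_X ^ length (wrap p S) = fps_X ^ 2 * (fps_X ^ length S :: rat fps fps)"
    by (simp add: wrap_def power_add mult.commute power2_eq_square)
  moreover have "fps_const (fps_X ^ da (wrap p S)) =
      (if fst p = snd p then 1 else fps_const fps_X) * fps_const (fps_X ^ da S :: rat fps)"
    by (simp add: wrap_def da_Cons_snoc mult.commute)
  ultimately show ?thesis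
    by (cases "fst p = snd p") (simp_all add: comp_weight_def mult_ac)
qed

lemma Kcoeff_recurrence:
  assumes "\<forall>r\<in>R. 0 < r"
  shows "Kcoeff R n = (if n = 0 then 1 else 0) + (if n \<in> R then fps_X else 0)
     + (\<Sum>p\<in>end_pairs R n. (if fst p = snd p then fps_X ^ 2 else fps_const fps_X * fps_X ^ 2)
                               * Kcoeff R (n - (fst p + snd p)))"
proof -
  let ?E = "(if n = 0 then {[]} else {}) \<union> (if n \<in> R then {[n]} else {})"
  let ?W = "\<Union>p\<in>end_pairs R n. wrap p ` comps R (n - (fst p + snd p))"
  have "finite ?W" using finite_end_pairs finite_comps by blast
  moreover have "?E \<inter> ?W = {}" by (auto simp: wrap_def)
  ultimately have "Kcoeff R n = sum comp_weight ?E + sum comp_weight ?W"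
    unfolding Kcoeff_def by (subst comps_decompose[OF assms]) (simp add: sum.union_disjoint)
  moreover have "sum comp_weight ?E = (if n = 0 then 1 else 0) + (if n \<in> R then fps_X else 0)"
    using assms by (cases "n = 0") (auto simp: comp_weight_def)
  moreover have "sum comp_weight ?W =
      (\<Sum>p\<in>end_pairs R n. sum comp_weight (wrap p ` comps R (n - (fst p + snd p))))"
    by (rule sum.UNION_disjoint) (use finite_end_pairs finite_comps wrap_eq_imp_eq in blast)+
  moreover have "sum comp_weight (wrap p ` comps R k) =
      (if fst p = snd p then fps_X ^ 2 else fps_const fps_X * fps_X ^ 2) * Kcoeff R k" for p k
    by (simp add: sum.reindex inj_on_subset[OF inj_wrap] comp_weight_wrap Kcoeff_def
        sum_distrib_left del: if_distrib)
  ultimately show ?thesis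
    by presburger
qed

lemma sum_end_pairs_diagonal_split:
  fixes g :: "nat \<Rightarrow> 'a::comm_ring_1"
  shows "(\<Sum>p\<in>end_pairs R n. (if fst p = snd p then u else v) * g (fst p + snd p))
    = u * (\<Sum>a\<in>{a\<in>R. 2 * a \<le> n}. g (2 * a))
      + v * ((\<Sum>p\<in>end_pairs R n. g (fst p + snd p)) - (\<Sum>a\<in>{a\<in>R. 2 * a \<le> n}. g (2 * a)))"
proof -
  let ?D = "end_pairs R n \<inter> {p. fst p = snd p}"
  have "?D = (\<lambda>a. (a, a)) ` {a\<in>R. 2 * a \<le> n}"
    by (auto simp: end_pairs_def)
  then have diagonal: "(\<Sum>p\<in>?D. g (fst p + snd p)) = (\<Sum>a\<in>{a\<in>R. 2 * a \<le> n}. g (2 * a))"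
    by (simp add: sum.reindex inj_on_def mult_2)
  have "(\<Sum>p\<in>end_pairs R n. g (fst p + snd p)) =
      (\<Sum>p\<in>?D. g (fst p + snd p)) + (\<Sum>p\<in>end_pairs R n - {p. fst p = snd p}. g (fst p + snd p))"
    using finite_end_pairs by (rule sum.Int_Diff)
  moreover have "(\<Sum>p\<in>end_pairs R n. (if fst p = snd p then u else v) * g (fst p + snd p))
      = u * (\<Sum>p\<in>?D. g (fst p + snd p))
        + v * (\<Sum>p\<in>end_pairs R n - {p. fst p = snd p}. g (fst p + snd p))"
    using finite_end_pairs
    by (simp add: if_distrib[of "\<lambda>c. c * _"] sum.If_cases sum_distrib_left Diff_eq
        del: if_distrib)
  ultimately show ?thesis
    using diagonal by (simp add: algebra_simps)
qed

lemma Rser_nth: "Rser R $ i = (if i \<in> R then 1 else 0)"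
  by (simp add: Rser_def)

lemma Rser_oo_square_nth: "(Rser R oo var_z ^ 2) $ i = (if even i \<and> i div 2 \<in> R then 1 else 0)"
proof -
  have "(Rser R oo var_z ^ 2) $ i = (\<Sum>j=0..i. Rser R $ j * (if i = 2 * j then 1 else 0))"
    by (simp add: fps_compose_nth var_z_def power_mult[symmetric])
  also have "\<dots> = (\<Sum>j=0..i. if j = i div 2 then (if even i then Rser R $ j else 0) else 0)"
    by (rule sum.cong) auto
  finally show ?thesis by (simp add: Rser_nth)
qed

lemma Rser_oo_square_mult_nth:
  "((Rser R oo var_z ^ 2) * G) $ n = (\<Sum>a\<in>{a\<in>R. 2 * a \<le> n}. G $ (n - 2 * a))"
proof -
  have "((Rser R oo var_z ^ 2) * G) $ n =
      (\<Sum>i=0..n. if even i \<and> i div 2 \<in> R then G $ (n - i) else 0)"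
    by (auto simp: fps_mult_nth Rser_oo_square_nth intro!: sum.cong)
  also have "\<dots> = (\<Sum>i\<in>{i\<in>{0..n}. even i \<and> i div 2 \<in> R}. G $ (n - i))"
    by (rule sum.inter_filter[symmetric]) simp
  also have "{i\<in>{0..n}. even i \<and> i div 2 \<in> R} = (\<lambda>a. 2 * a) ` {a\<in>R. 2 * a \<le> n}"
    by (auto elim!: evenE)
  finally show ?thesis
    by (simp add: sum.reindex inj_on_def)
qed

lemma Rser_square_mult_nth:
  "(Rser R ^ 2 * G) $ n = (\<Sum>p\<in>end_pairs R n. G $ (n - (fst p + snd p)))"
proof -
  define g where "g i j = (if i \<in> R \<and> j \<in> R then G $ (n - (i + j)) else 0)" for i j
  have "(Rser R ^ 2 * G) $ n = (\<Sum>k\<le>n. \<Sum>i\<le>k. g i (k - i))"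
    by (auto simp: fps_mult_nth power2_eq_square sum_distrib_right Rser_nth g_def
        atLeast0AtMost intro!: sum.cong)
  also have "\<dots> = (\<Sum>(i, j)\<in>{(i, j). i + j \<le> n}. g i j)"
    by (rule sum.triangle_reindex_eq[symmetric])
  also have "\<dots> = (\<Sum>p\<in>{(i, j). i + j \<le> n}.
      if fst p \<in> R \<and> snd p \<in> R then G $ (n - (fst p + snd p)) else 0)"
    by (simp add: g_def split_beta)
  also have "\<dots> = (\<Sum>p\<in>{p\<in>{(i, j). i + j \<le> n}. fst p \<in> R \<and> snd p \<in> R}.
      G $ (n - (fst p + snd p)))"
    by (rule sum.inter_filter[symmetric], rule finite_subset[of _ "{..n} \<times> {..n}"]) auto
  also have "{p\<in>{(i, j). i + j \<le> n}. fst p \<in> R \<and> snd p \<in> R} = end_pairs R n"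
    by (auto simp: end_pairs_def)
  finally show ?thesis .
qed

lemma Kser_recurrence:
  assumes pos: "\<forall>r\<in>R. 0 < r"
  defines "P \<equiv> Rser R oo var_z ^ 2"
  shows "Kser R = 1 + var_x * Rser R + var_x ^ 2 * (P * Kser R)
    + var_t * var_x ^ 2 * (Rser R ^ 2 * Kser R - P * Kser R)"
proof (rule fps_ext)
  fix n
  let ?u = "fps_X ^ 2 :: rat fps fps" and ?v = "fps_const fps_X * fps_X ^ 2 :: rat fps fps"
  have x2: "var_x ^ 2 = fps_const ?u"
    by (simp add: var_x_def fps_const_power)
  have tx2: "var_t * var_x ^ 2 = fps_const ?v"
    by (simp add: x2 var_t_def)
  have "Kser R $ n = (if n = 0 then 1 else 0) + (if n \<in> R then fps_X else 0)
     + (\<Sum>p\<in>end_pairs R n. (if fst p = snd p then ?u else ?v) * Kcoeff R (n - (fst p + snd p)))"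
    unfolding Kser_nth by (rule Kcoeff_recurrence[OF pos])
  also have "\<dots> = (if n = 0 then 1 else 0) + (if n \<in> R then fps_X else 0)
     + ?u * (\<Sum>a\<in>{a\<in>R. 2 * a \<le> n}. Kcoeff R (n - 2 * a))
     + ?v * ((\<Sum>p\<in>end_pairs R n. Kcoeff R (n - (fst p + snd p)))
             - (\<Sum>a\<in>{a\<in>R. 2 * a \<le> n}. Kcoeff R (n - 2 * a)))"
    using sum_end_pairs_diagonal_split[where g = "\<lambda>k. Kcoeff R (n - k)" and u = ?u and v = ?v]
    by simp
  also have "\<dots> = (1 + var_x * Rser R + var_x ^ 2 * (P * Kser R)
    + var_t * var_x ^ 2 * (Rser R ^ 2 * Kser R - P * Kser R)) $ n"
    unfolding tx2 unfolding x2
    by (simp add: P_def Rser_oo_square_mult_nth Rser_square_mult_nth Kser_nth Rser_nth var_x_def)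
  finally show "Kser R $ n = (1 + var_x * Rser R + var_x ^ 2 * (P * Kser R)
    + var_t * var_x ^ 2 * (Rser R ^ 2 * Kser R - P * Kser R)) $ n" .
qed

lemma fps_mult_inverse_eq_1:
  fixes f :: "'a::{comm_ring_1,inverse} fps"
  assumes "inverse (1::'a) = 1" and "f $ 0 = 1"
  shows "f * inverse f = 1"
  using fps_right_inverse[of f 1] assms by (simp add: fps_inverse_def)

theorem proposition2p2:
  fixes R :: "nat set"
  assumes "\<forall>r\<in>R. 0 < r"
  shows "Kser R =
    (1 + var_x * Rser R) *
    inverse (1 - var_x ^ 2 * (Rser R oo var_z ^ 2)
               - var_t * var_x ^ 2 * (Rser R ^ 2 - (Rser R oo var_z ^ 2)))"
proof -
  define D where "D = 1 - var_x ^ 2 * (Rser R oo var_z ^ 2)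
               - var_t * var_x ^ 2 * (Rser R ^ 2 - (Rser R oo var_z ^ 2))"
  have "Kser R * D = Kser R - (var_x ^ 2 * ((Rser R oo var_z ^ 2) * Kser R)
      + var_t * var_x ^ 2 * (Rser R ^ 2 * Kser R - (Rser R oo var_z ^ 2) * Kser R))"
    by (simp add: D_def algebra_simps)
  also have "\<dots> = 1 + var_x * Rser R"
    by (subst (1) Kser_recurrence[OF assms]) simp
  finally have "Kser R * D = 1 + var_x * Rser R" .
  moreover have "D * inverse D = 1"
  proof (rule fps_mult_inverse_eq_1)
    show "inverse (1 :: rat fps fps) = 1"
      by (rule fps_inverse_one'[OF fps_inverse_one])
    show "D $ 0 = 1"
      using assms by (auto simp: D_def Rser_nth fps_square_nth var_x_def var_t_def)
  qed
  ultimately have "Kser R = (1 + var_x * Rser R) * inverse D"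
    by (metis mult.assoc mult.right_neutral)
  then show ?thesis unfolding D_def .
qed

end
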